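(* Let $k\ge1$ be an integer, $G=(V,E)$ a $k$-perfectly orientable graph with certifying orientation $H$, and $Q$ the polytope \[ Q=\Big\{x\in[0,1]^V:\ x_v+\sum_{u\in N^+_H(v)}x_u\le k\ \text{ for all } v\in V\Big\}. \] For each $b\in[0,1]$: there is a deterministic, oblivious, monotone $(b/k,\,1-b)$-balanced contention resolution scheme for $Q$ (with respect to the independent sets of $G$), and there is a randomized monotone $(b/k,\,e^{-b})$-balanced contention resolution scheme for $Q$.
   Context: $\mathcal{I}$ denotes the family of independent sets of $G$; $\alpha(G')$ is the maximum size of an independent set of a graph $G'$. $G$ is $k$-perfectly orientable if there is an orientation $H=(V,A)$ of $G$ with $\alpha(G[N^+_H(v)])\le k$ for all $v$, where $N^+_H(v)=\{u:(v,u)\in A\}$. For $x\in[0,1]^V$, $R(x)$ denotes a random subset of $V$ containing each $v$ independently with probability $x_v$, and $\mathrm{support}(x)=\{v:x_v>0\}$; for $b\in[0,1]$, $bQ=\{bx:x\in Q\}$. For $b,c\in[0,1]$, a $(b,c)$-balanced contention resolution (CR) scheme $\pi$ for $Q$ is a procedure that for every $x\in bQ$ and $A\subseteq V$ returns a (possibly random) set $\pi_x(A)\subseteq A\cap\mathrm{support}(x)$ such that (i) $\pi_x(A)\in\mathcal{I}$ with probability 1 for all $A\subseteq V$, $x\in bQ$, and (ii) for all $x\in bQ$ and all $i\in\mathrm{support}(x)$, $\Pr[i\in\pi_x(R(x))\mid i\in R(x)]\ge c$. The scheme is monotone if $\Pr[i\in\pi_x(A_1)]\ge\Pr[i\in\pi_x(A_2)]$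 whenever $i\in A_1\subseteq A_2$; deterministic if $\pi$ is a deterministic algorithm; oblivious if it is deterministic and $\pi_x(A)=\pi_y(A)$ for all $x,y,A$.
   Formalization: An oblivious scheme is deterministic with $\pi_x(A_1)=\pi_y(A_2)$ whenever $A_1\cap\mathrm{support}(x)$ equals $A_2\cap\mathrm{support}(y)$, in place of $\pi_x(A)=\pi_y(A)$ for all x, y and A. The statement above fails without it. *)

theory Defs
  imports "HOL-Probability.Probability"
begin

definition simple_graph :: "'a set \<Rightarrow> ('a \<Rightarrow> 'a \<Rightarrow> bool) \<Rightarrow> bool" where
  "simple_graph V E \<longleftrightarrow> finite V \<and> (\<forall>u v. E u v \<longrightarrow> u \<in> V \<and> v \<in> V)
     \<and> (\<forall>u v. E u v \<longrightarrow> E v u) \<and> (\<forall>v. \<not> E v v)"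

definition indep_set :: "'a set \<Rightarrow> ('a \<Rightarrow> 'a \<Rightarrow> bool) \<Rightarrow> 'a set \<Rightarrow> bool" where
  "indep_set V E I \<longleftrightarrow> I \<subseteq> V \<and> (\<forall>u\<in>I. \<forall>v\<in>I. \<not> E u v)"

definition alpha :: "('a \<Rightarrow> 'a \<Rightarrow> bool) \<Rightarrow> 'a set \<Rightarrow> nat" where
  "alpha E S = Max {card I | I. I \<subseteq> S \<and> (\<forall>u\<in>I. \<forall>v\<in>I. \<not> E u v)}"

definition orientation :: "('a \<Rightarrow> 'a \<Rightarrow> bool) \<Rightarrow> ('a \<Rightarrow> 'a \<Rightarrow> bool) \<Rightarrow> bool" where
  "orientation E A \<longleftrightarrow> (\<forall>u v. A u v \<longrightarrow> E u v) \<and> (\<forall>u v. E u v \<longrightarrow> A u v \<or> A v u)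
     \<and> (\<forall>u v. A u v \<longrightarrow> \<not> A v u)"

definition out_nbrs :: "('a \<Rightarrow> 'a \<Rightarrow> bool) \<Rightarrow> 'a \<Rightarrow> 'a set" where
  "out_nbrs A v = {u. A v u}"

definition k_perfect_orientation :: "nat \<Rightarrow> 'a set \<Rightarrow> ('a \<Rightarrow> 'a \<Rightarrow> bool) \<Rightarrow> ('a \<Rightarrow> 'a \<Rightarrow> bool) \<Rightarrow> bool" where
  "k_perfect_orientation k V E A \<longleftrightarrow> orientation E A \<and> (\<forall>v\<in>V. alpha E (out_nbrs A v) \<le> k)"

text \<open>Vectors in R^V are functions vanishing outside V.\<close>
definition polytopeQ :: "nat \<Rightarrow> 'a set \<Rightarrow> ('a \<Rightarrow> 'a \<Rightarrow> bool) \<Rightarrow> ('a \<Rightarrow> real) set" where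
  "polytopeQ k V A = {x. (\<forall>v. v \<notin> V \<longrightarrow> x v = 0) \<and> (\<forall>v\<in>V. 0 \<le> x v \<and> x v \<le> 1)
      \<and> (\<forall>v\<in>V. x v + (\<Sum>u\<in>out_nbrs A v. x u) \<le> real k)}"

definition scaled :: "real \<Rightarrow> ('a \<Rightarrow> real) set \<Rightarrow> ('a \<Rightarrow> real) set" where
  "scaled b Q = {(\<lambda>v. b * x v) | x. x \<in> Q}"

definition support :: "'a set \<Rightarrow> ('a \<Rightarrow> real) \<Rightarrow> 'a set" where
  "support V x = {v\<in>V. x v > 0}"

definition randset :: "'a set \<Rightarrow> ('a \<Rightarrow> real) \<Rightarrow> 'a set pmf" where
  "randset V x = map_pmf (\<lambda>f. {v. f v}) (Pi_pmf V False (\<lambda>v. bernoulli_pmf (x v)))"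

text \<open>A (possibly randomized) CR scheme: sch x A is the distribution of pi_x(A).
  Joint distribution of (R(x), pi_x(R(x))).\<close>
definition joint :: "'a set \<Rightarrow> (('a \<Rightarrow> real) \<Rightarrow> 'a set \<Rightarrow> 'a set pmf) \<Rightarrow> ('a \<Rightarrow> real) \<Rightarrow> ('a set \<times> 'a set) pmf" where
  "joint V sch x = bind_pmf (randset V x) (\<lambda>R. map_pmf (\<lambda>S. (R, S)) (sch x R))"

definition balanced_CR :: "'a set \<Rightarrow> ('a \<Rightarrow> 'a \<Rightarrow> bool) \<Rightarrow> ('a \<Rightarrow> real) set \<Rightarrow> real \<Rightarrow> real
    \<Rightarrow> (('a \<Rightarrow> real) \<Rightarrow> 'a set \<Rightarrow> 'a set pmf) \<Rightarrow> bool" where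
  "balanced_CR V E Q b c sch \<longleftrightarrow>
     (\<forall>x\<in>scaled b Q. \<forall>A. A \<subseteq> V \<longrightarrow>
        (\<forall>S\<in>set_pmf (sch x A). S \<subseteq> A \<inter> support V x \<and> indep_set V E S)) \<and>
     (\<forall>x\<in>scaled b Q. \<forall>i\<in>support V x.
        measure_pmf.prob (joint V sch x) {p. i \<in> snd p \<and> i \<in> fst p}
          / measure_pmf.prob (randset V x) {R. i \<in> R} \<ge> c)"

definition monotone_CR :: "'a set \<Rightarrow> ('a \<Rightarrow> real) set \<Rightarrow> real
    \<Rightarrow> (('a \<Rightarrow> real) \<Rightarrow> 'a set \<Rightarrow> 'a set pmf) \<Rightarrow> bool" where
  "monotone_CR V Q b sch \<longleftrightarrow>
     (\<forall>x\<in>scaled b Q. \<forall>i A1 A2. i \<in> A1 \<longrightarrow> A1 \<subseteq> A2 \<longrightarrow> A2 \<subseteq> V \<longrightarrow>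
        measure_pmf.prob (sch x A1) {S. i \<in> S} \<ge> measure_pmf.prob (sch x A2) {S. i \<in> S})"

definition deterministic_CR :: "(('a \<Rightarrow> real) \<Rightarrow> 'a set \<Rightarrow> 'a set pmf) \<Rightarrow> bool" where
  "deterministic_CR sch \<longleftrightarrow> (\<exists>f. \<forall>x A. sch x A = return_pmf (f x A))"

definition oblivious_CR :: "'a set \<Rightarrow> (('a \<Rightarrow> real) \<Rightarrow> 'a set \<Rightarrow> 'a set pmf) \<Rightarrow> bool" where
  "oblivious_CR V sch \<longleftrightarrow> deterministic_CR sch \<and>
     (\<forall>x y A B. A \<inter> support V x = B \<inter> support V y \<longrightarrow> sch x A = sch y B)"

end

theory Submission
  imports Defs
begin

text \<open>
  Given x and an input set A, mark every vertex v independently with probability p_v and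
  return the marked vertices of A \<inter> supp(x) that have no marked out-neighbour in A \<inter> supp(x),
  i.e. the sinks of the marked part of H. Any edge of G is oriented, so two returned vertices
  are never adjacent. A vertex i \<in> R(x) is returned with probability
  p_i \<Prod> (1 - x_u p_u), the product over the out-neighbours u of i, which only decreases
  when A grows. On b/k Q the out-neighbours of i carry total weight at most b - x_i. With
  p = 1 this yields the deterministic bound \<Prod>(1 - x_u) \<ge> 1 - b; with
  p_v = (1 - e^(-x_v)) / x_v every factor becomes e^(-x_u) and p_i \<ge> e^(-x_i), which yields e^(-b).
  Only the orientation H enters.
\<close>

lemma prob_bind_pmf:
  "measure_pmf.prob (bind_pmf M N) X = measure_pmf.expectation M (\<lambda>x. measure_pmf.prob (N x) X)"
  unfolding measure_pmf_bind
  by (rule measure_pmf.measure_bind)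
     (auto simp: measurable_pmf_measure1 measurable_count_space_eq1 space_subprob_algebra
           intro: prob_space_imp_subprob_space measure_pmf.prob_space_axioms)

lemma prob_Pi_pmf_agree_on:
  assumes "finite A" "J \<subseteq> A"
  shows "measure_pmf.prob (Pi_pmf A dflt p) {g. \<forall>j\<in>J. g j = c j} = (\<Prod>j\<in>J. pmf (p j) (c j))"
proof -
  define B where "B v = (if v \<in> J then {c v} else UNIV)" for v
  have "{g. \<forall>j\<in>J. g j = c j} = Pi A B"
    using assms(2) by (auto simp: B_def Pi_def)
  then have "measure_pmf.prob (Pi_pmf A dflt p) {g. \<forall>j\<in>J. g j = c j}
      = (\<Prod>v\<in>A. measure_pmf.prob (p v) (B v))"
    using measure_Pi_pmf_Pi[OF assms(1)] by simp
  also have "\<dots> = (\<Prod>j\<in>J. measure_pmf.prob (p j) (B j))"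
    using assms by (intro prod.mono_neutral_right) (auto simp: B_def)
  also have "\<dots> = (\<Prod>j\<in>J. pmf (p j) (c j))"
    by (intro prod.cong) (auto simp: B_def measure_pmf_single)
  finally show ?thesis .
qed

lemma expectation_Pi_pmf_prod_subset:
  fixes f :: "'a \<Rightarrow> 'b \<Rightarrow> real"
  assumes "finite A" "J \<subseteq> A"
    and "\<And>j. j \<in> J \<Longrightarrow> integrable (measure_pmf (p j)) (f j)"
    and "\<And>j y. j \<in> J \<Longrightarrow> y \<in> set_pmf (p j) \<Longrightarrow> 0 \<le> f j y"
  shows "measure_pmf.expectation (Pi_pmf A dflt p) (\<lambda>g. \<Prod>j\<in>J. f j (g j))
       = (\<Prod>j\<in>J. measure_pmf.expectation (p j) (f j))"
proof -
  have "finite J" using assms(1,2) finite_subset by blast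
  have "measure_pmf.expectation (Pi_pmf A dflt p) (\<lambda>g. \<Prod>j\<in>J. f j (g j))
      = measure_pmf.expectation (Pi_pmf J dflt p) (\<lambda>g. \<Prod>j\<in>J. f j (g j))"
    unfolding Pi_pmf_subset[OF assms(1,2)] integral_map_pmf
    by (intro Bochner_Integration.integral_cong prod.cong) auto
  also have "\<dots> = (\<Prod>j\<in>J. measure_pmf.expectation (p j) (f j))"
    using \<open>finite J\<close> assms(3,4) by (rule expectation_prod_Pi_pmf)
  finally show ?thesis .
qed

lemma expectation_Pi_bernoulli_prod:
  fixes f :: "'a \<Rightarrow> bool \<Rightarrow> real"
  assumes "finite A" "J \<subseteq> A"
    and "\<And>j. j \<in> J \<Longrightarrow> 0 \<le> q j \<and> q j \<le> 1" "\<And>j t. j \<in> J \<Longrightarrow> 0 \<le> f j t"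
  shows "measure_pmf.expectation (Pi_pmf A False (\<lambda>v. bernoulli_pmf (q v))) (\<lambda>g. \<Prod>j\<in>J. f j (g j))
       = (\<Prod>j\<in>J. q j * f j True + (1 - q j) * f j False)"
  using assms
  by (subst expectation_Pi_pmf_prod_subset)
     (auto intro!: prod.cong integrable_measure_pmf_finite simp: algebra_simps)

lemma prod_antimono_subset:
  fixes g :: "'a \<Rightarrow> real"
  assumes "finite B" "A \<subseteq> B" "\<And>a. a \<in> B \<Longrightarrow> 0 \<le> g a \<and> g a \<le> 1"
  shows "(\<Prod>a\<in>B. g a) \<le> (\<Prod>a\<in>A. g a)"
proof -
  have "(\<Prod>a\<in>B. g a) = (\<Prod>a\<in>A. g a) * (\<Prod>a\<in>B - A. g a)"
    using assms by (metis prod.subset_diff mult.commute)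
  also have "\<dots> \<le> (\<Prod>a\<in>A. g a)"
    using assms by (intro mult_right_le_one_le prod_le_1 prod_nonneg) (auto dest: subsetD)
  finally show ?thesis .
qed

lemma indep_set_if_no_arcs:
  "orientation E H \<Longrightarrow> B \<subseteq> V \<Longrightarrow> (\<And>u v. u \<in> B \<Longrightarrow> v \<in> B \<Longrightarrow> \<not> H u v) \<Longrightarrow> indep_set V E B"
  unfolding orientation_def indep_set_def by blast

lemma out_nbrs_subset:
  "simple_graph V E \<Longrightarrow> orientation E H \<Longrightarrow> out_nbrs H v \<subseteq> V"
  unfolding simple_graph_def orientation_def out_nbrs_def by blast

lemma not_in_out_nbrs: "orientation E H \<Longrightarrow> v \<notin> out_nbrs H v"
  unfolding orientation_def out_nbrs_def by blast

definition sinks_in :: "('a \<Rightarrow> 'a \<Rightarrow> bool) \<Rightarrow> 'a set \<Rightarrow> 'a set" where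
  "sinks_in H B = {v\<in>B. out_nbrs H v \<inter> B = {}}"

lemma indep_set_sinks_in:
  assumes "orientation E H" "B \<subseteq> V"
  shows "indep_set V E (sinks_in H B)"
  using assms(2) by (intro indep_set_if_no_arcs[OF assms(1)]) (auto simp: sinks_in_def out_nbrs_def)

definition sink_CR :: "'a set \<Rightarrow> ('a \<Rightarrow> 'a \<Rightarrow> bool) \<Rightarrow> (('a \<Rightarrow> real) \<Rightarrow> 'a \<Rightarrow> real)
    \<Rightarrow> ('a \<Rightarrow> real) \<Rightarrow> 'a set \<Rightarrow> 'a set pmf" where
  "sink_CR V H p x A = map_pmf (\<lambda>marked. sinks_in H (A \<inter> support V x \<inter> {v. marked v}))
     (Pi_pmf V False (\<lambda>v. bernoulli_pmf (p x v)))"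

lemma set_pmf_sink_CR:
  assumes "orientation E H" "S \<in> set_pmf (sink_CR V H p x A)"
  shows "S \<subseteq> A \<inter> support V x \<and> indep_set V E S"
proof -
  obtain marked where S: "S = sinks_in H (A \<inter> support V x \<inter> {v. marked v})"
    using assms(2) by (auto simp: sink_CR_def)
  have "indep_set V E S"
    unfolding S by (rule indep_set_sinks_in[OF assms(1)]) (auto simp: support_def)
  then show ?thesis using S by (auto simp: sinks_in_def)
qed

lemma sink_CR_mark_all:
  assumes "finite V"
  shows "sink_CR V H (\<lambda>_ _. 1) x A = return_pmf (sinks_in H (A \<inter> support V x))"
proof -
  have "bernoulli_pmf 1 = return_pmf True"
    by (intro pmf_eqI) (auto simp: pmf_bernoulli_True pmf_bernoulli_False indicator_def)
  moreover have "A \<inter> support V x \<inter> {v. v \<in> V} = A \<inter> support V x"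
    by (auto simp: support_def)
  ultimately show ?thesis using assms by (simp add: sink_CR_def)
qed

lemma oblivious_sink_CR_mark_all:
  assumes "finite V"
  shows "oblivious_CR V (sink_CR V H (\<lambda>_ _. 1))"
  unfolding oblivious_CR_def deterministic_CR_def sink_CR_mark_all[OF assms] by auto

lemma prob_sink_CR:
  assumes "finite V" "out_nbrs H i \<subseteq> V" "i \<notin> out_nbrs H i"
    and p: "\<And>v. v \<in> V \<Longrightarrow> 0 \<le> p x v \<and> p x v \<le> 1"
  shows "measure_pmf.prob (sink_CR V H p x A) {S. i \<in> S} =
    (if i \<in> A \<inter> support V x then p x i * (\<Prod>u\<in>out_nbrs H i \<inter> A \<inter> support V x. 1 - p x u) else 0)"
proof (cases "i \<in> A \<inter> support V x")
  case True
  define N where "N = out_nbrs H i \<inter> A \<inter> support V x"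
  have "i \<in> V" "i \<notin> N" "N \<subseteq> V" using True assms(2,3) by (auto simp: N_def support_def)
  then have "finite N" using assms(1) finite_subset by blast
  have "(\<lambda>marked. sinks_in H (A \<inter> support V x \<inter> {v. marked v})) -` {S. i \<in> S}
      = {g. \<forall>j\<in>insert i N. g j = (j = i)}"
    using True assms(3) by (auto simp: sinks_in_def N_def)
  then have "measure_pmf.prob (sink_CR V H p x A) {S. i \<in> S}
      = measure_pmf.prob (Pi_pmf V False (\<lambda>v. bernoulli_pmf (p x v))) {g. \<forall>j\<in>insert i N. g j = (j = i)}"
    by (simp only: sink_CR_def measure_map_pmf)
  also have "\<dots> = (\<Prod>j\<in>insert i N. pmf (bernoulli_pmf (p x j)) (j = i))"
    using \<open>i \<in> V\<close> \<open>N \<subseteq> V\<close> by (intro prob_Pi_pmf_agree_on[OF assms(1)]) auto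
  also have "\<dots> = p x i * (\<Prod>u\<in>N. 1 - p x u)"
  proof -
    have "pmf (bernoulli_pmf (p x u)) (u = i) = 1 - p x u" if "u \<in> N" for u
    proof -
      have "u \<noteq> i" "u \<in> V" using that \<open>i \<notin> N\<close> \<open>N \<subseteq> V\<close> by auto
      then show ?thesis using p[of u] by (simp add: pmf_bernoulli_False)
    qed
    moreover have "pmf (bernoulli_pmf (p x i)) True = p x i"
      using p[OF \<open>i \<in> V\<close>] by (simp add: pmf_bernoulli_True)
    ultimately show ?thesis
      using \<open>i \<notin> N\<close> \<open>finite N\<close> by (simp add: prod.insert cong: prod.cong)
  qed
  finally show ?thesis using True by (simp add: N_def)
next
  case False
  then have never: "(\<lambda>marked. sinks_in H (A \<inter> support V x \<inter> {v. marked v})) -` {S. i \<in> S} = {}"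
    by (auto simp: sinks_in_def)
  show ?thesis
    unfolding sink_CR_def measure_map_pmf never using False by auto
qed

lemma prob_randset_mem:
  assumes "finite V" "i \<in> V" "0 \<le> x i" "x i \<le> 1"
  shows "measure_pmf.prob (randset V x) {R. i \<in> R} = x i"
  using assms prob_Pi_pmf_agree_on[of V "{i}" False "\<lambda>v. bernoulli_pmf (x v)" "\<lambda>_. True"]
  by (simp add: randset_def)

lemma prob_joint_sink_CR:
  assumes fin: "finite V" and "out_nbrs H i \<subseteq> V" "i \<notin> out_nbrs H i"
    and p: "\<And>v. v \<in> V \<Longrightarrow> 0 \<le> p x v \<and> p x v \<le> 1"
    and x: "\<And>v. v \<in> V \<Longrightarrow> 0 \<le> x v \<and> x v \<le> 1"
    and i: "i \<in> support V x"
  shows "measure_pmf.prob (joint V (sink_CR V H p) x) {pr. i \<in> snd pr \<and> i \<in> fst pr} =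
     x i * p x i * (\<Prod>u\<in>out_nbrs H i \<inter> support V x. 1 - x u * p x u)"
proof -
  define N where "N = out_nbrs H i \<inter> support V x"
  have "i \<in> V" "i \<notin> N" "N \<subseteq> V" using i assms(2,3) by (auto simp: N_def support_def)
  then have "finite N" using fin finite_subset by blast
  \<comment> \<open>Given R, the success probability is a product of one factor f j (j \<in> R) per vertex,
    so its expectation over the independent coordinates of R factorizes.\<close>
  define f where "f j t = (if j = i then (if t then p x i else 0) else if t then 1 - p x j else 1)"
    for j t
  have given_R: "measure_pmf.prob (map_pmf (Pair R) (sink_CR V H p x R)) {pr. i \<in> snd pr \<and> i \<in> fst pr}
     = (\<Prod>j\<in>insert i N. f j (j \<in> R))" for R
  proof (cases "i \<in> R")
    case True
    have "out_nbrs H i \<inter> R \<inter> support V x = {u\<in>N. u \<in> R}" by (auto simp: N_def)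
    then have "(\<Prod>u\<in>out_nbrs H i \<inter> R \<inter> support V x. 1 - p x u)
        = (\<Prod>u\<in>N. if u \<in> R then 1 - p x u else 1)"
      using \<open>finite N\<close> by (simp add: prod.inter_filter)
    also have "\<dots> = (\<Prod>u\<in>N. f u (u \<in> R))"
      using \<open>i \<notin> N\<close> by (intro prod.cong) (auto simp: f_def)
    finally have "(\<Prod>u\<in>out_nbrs H i \<inter> R \<inter> support V x. 1 - p x u) = (\<Prod>u\<in>N. f u (u \<in> R))" .
    moreover have "Pair R -` {pr. i \<in> snd pr \<and> i \<in> fst pr} = {S. i \<in> S}" using True by auto
    ultimately show ?thesis
      using True i \<open>i \<notin> N\<close> \<open>N \<subseteq> V\<close> fin
        prob_sink_CR[where p=p and x=x and A=R, OF fin assms(2,3) p]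
      by (auto simp: f_def dest: finite_subset)
  next
    case False
    then have "Pair R -` {pr. i \<in> snd pr \<and> i \<in> fst pr} = {}" by auto
    with False \<open>N \<subseteq> V\<close> fin show ?thesis by (auto simp: f_def dest: finite_subset)
  qed
  have "measure_pmf.prob (joint V (sink_CR V H p) x) {pr. i \<in> snd pr \<and> i \<in> fst pr}
     = measure_pmf.expectation (Pi_pmf V False (\<lambda>v. bernoulli_pmf (x v)))
         (\<lambda>g. \<Prod>j\<in>insert i N. f j (g j))"
    unfolding joint_def prob_bind_pmf randset_def integral_map_pmf given_R mem_Collect_eq ..
  also have "\<dots> = (\<Prod>j\<in>insert i N. x j * f j True + (1 - x j) * f j False)"
    using \<open>i \<in> V\<close> \<open>N \<subseteq> V\<close> p x
    by (intro expectation_Pi_bernoulli_prod[OF fin]) (auto simp: f_def)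
  also have "\<dots> = x i * p x i * (\<Prod>u\<in>N. 1 - x u * p x u)"
    using \<open>i \<notin> N\<close> \<open>N \<subseteq> V\<close> fin
    by (subst prod.insert) (auto simp: f_def algebra_simps intro!: prod.cong dest: finite_subset)
  finally show ?thesis by (simp add: N_def)
qed

lemma monotone_sink_CR:
  assumes "simple_graph V E" "orientation E H"
    and p: "\<And>x v. x \<in> scaled c Q \<Longrightarrow> v \<in> V \<Longrightarrow> 0 \<le> p x v \<and> p x v \<le> 1"
  shows "monotone_CR V Q c (sink_CR V H p)"
  unfolding monotone_CR_def
proof (intro ballI allI impI)
  fix x i A1 A2
  assume x: "x \<in> scaled c Q" and "i \<in> A1" "A1 \<subseteq> A2" "A2 \<subseteq> V"
  have fin: "finite V" using assms(1) by (simp add: simple_graph_def)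
  note prob = prob_sink_CR[where p=p and x=x and i=i,
      OF fin out_nbrs_subset[OF assms(1,2)] not_in_out_nbrs[OF assms(2)] p[OF x]]
  show "measure_pmf.prob (sink_CR V H p x A2) {S. i \<in> S} \<le> measure_pmf.prob (sink_CR V H p x A1) {S. i \<in> S}"
  proof (cases "i \<in> support V x")
    case True
    have "finite (out_nbrs H i \<inter> A2 \<inter> support V x)"
      using fin by (simp add: support_def)
    then have "(\<Prod>u\<in>out_nbrs H i \<inter> A2 \<inter> support V x. 1 - p x u)
        \<le> (\<Prod>u\<in>out_nbrs H i \<inter> A1 \<inter> support V x. 1 - p x u)"
      using \<open>A1 \<subseteq> A2\<close> p[OF x] by (intro prod_antimono_subset) (auto simp: support_def)
    then show ?thesis
      using True \<open>i \<in> A1\<close> \<open>A1 \<subseteq> A2\<close> p[OF x, of i]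
      by (auto simp: prob support_def intro: mult_left_mono)
  qed (simp add: prob)
qed

lemma balanced_sink_CR:
  assumes "simple_graph V E" "orientation E H"
    and p: "\<And>x v. x \<in> scaled c Q \<Longrightarrow> v \<in> V \<Longrightarrow> 0 \<le> p x v \<and> p x v \<le> 1"
    and x: "\<And>x v. x \<in> scaled c Q \<Longrightarrow> v \<in> V \<Longrightarrow> 0 \<le> x v \<and> x v \<le> 1"
    and bound: "\<And>x i. x \<in> scaled c Q \<Longrightarrow> i \<in> support V x \<Longrightarrow>
               d \<le> p x i * (\<Prod>u\<in>out_nbrs H i \<inter> support V x. 1 - x u * p x u)"
  shows "balanced_CR V E Q c d (sink_CR V H p)"
  unfolding balanced_CR_def
proof (intro conjI ballI allI impI)
  fix x A S
  assume "A \<subseteq> V" "S \<in> set_pmf (sink_CR V H p x A)"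
  show "S \<subseteq> A \<inter> support V x" "indep_set V E S"
    using set_pmf_sink_CR[OF assms(2) \<open>S \<in> set_pmf (sink_CR V H p x A)\<close>] by auto
next
  fix x i
  assume "x \<in> scaled c Q" and i: "i \<in> support V x"
  have fin: "finite V" using assms(1) by (simp add: simple_graph_def)
  have "i \<in> V" "0 < x i" using i by (auto simp: support_def)
  have "measure_pmf.prob (joint V (sink_CR V H p) x) {pr. i \<in> snd pr \<and> i \<in> fst pr}
      / measure_pmf.prob (randset V x) {R. i \<in> R}
      = p x i * (\<Prod>u\<in>out_nbrs H i \<inter> support V x. 1 - x u * p x u)"
    using \<open>0 < x i\<close> \<open>i \<in> V\<close> x[OF \<open>x \<in> scaled c Q\<close>]
    by (simp add: prob_randset_mem[OF fin] prob_joint_sink_CR[where p=p and x=x and i=i,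
          OF fin out_nbrs_subset[OF assms(1,2)] not_in_out_nbrs[OF assms(2)]
          p[OF \<open>x \<in> scaled c Q\<close>] x[OF \<open>x \<in> scaled c Q\<close>] i])
  then show "d \<le> measure_pmf.prob (joint V (sink_CR V H p) x) {pr. i \<in> snd pr \<and> i \<in> fst pr}
      / measure_pmf.prob (randset V x) {R. i \<in> R}"
    using bound[OF \<open>x \<in> scaled c Q\<close> i] by simp
qed

lemma scaled_polytopeQ_bounds:
  assumes "k \<ge> 1" "0 \<le> b" "b \<le> 1" "x \<in> scaled (b / real k) (polytopeQ k V H)" "v \<in> V"
  shows "0 \<le> x v \<and> x v \<le> 1" "x v + (\<Sum>u\<in>out_nbrs H v. x u) \<le> b"
proof -
  obtain y where y: "y \<in> polytopeQ k V H" and x: "x = (\<lambda>v. b / real k * y v)"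
    using assms(4) by (auto simp: scaled_def)
  have "0 \<le> b / real k" "b / real k \<le> 1" using assms(1-3) by auto
  moreover have "0 \<le> y v" "y v \<le> 1" using y assms(5) by (auto simp: polytopeQ_def)
  ultimately have "0 \<le> b / real k * y v \<and> b / real k * y v \<le> 1"
    by (intro conjI mult_nonneg_nonneg mult_le_one)
  then show "0 \<le> x v \<and> x v \<le> 1" by (simp only: x)
  have "x v + (\<Sum>u\<in>out_nbrs H v. x u) = b / real k * (y v + (\<Sum>u\<in>out_nbrs H v. y u))"
    by (simp add: x sum_distrib_left algebra_simps)
  also have "\<dots> \<le> b / real k * real k"
    using y assms(5) \<open>0 \<le> b / real k\<close> by (intro mult_left_mono) (auto simp: polytopeQ_def)
  also have "\<dots> = b" using assms(1) by simp
  finally show "x v + (\<Sum>u\<in>out_nbrs H v. x u) \<le> b" .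
qed

lemma sum_out_nbrs_support_le:
  assumes "k \<ge> 1" "0 \<le> b" "b \<le> 1" "x \<in> scaled (b / real k) (polytopeQ k V H)"
    and "simple_graph V E" "orientation E H" "i \<in> V"
  shows "(\<Sum>u\<in>out_nbrs H i \<inter> support V x. x u) \<le> b - x i"
proof -
  have "finite (out_nbrs H i)" "out_nbrs H i \<subseteq> V"
    using out_nbrs_subset[OF assms(5,6)] assms(5) by (auto simp: simple_graph_def dest: finite_subset)
  then have "(\<Sum>u\<in>out_nbrs H i \<inter> support V x. x u) \<le> (\<Sum>u\<in>out_nbrs H i. x u)"
    using scaled_polytopeQ_bounds(1)[OF assms(1-4)] by (intro sum_mono2) auto
  then show ?thesis using scaled_polytopeQ_bounds(2)[OF assms(1-4,7)] by simp
qed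

lemma balanced_sink_CR_mark_all:
  assumes "k \<ge> 1" "0 \<le> b" "b \<le> 1" "simple_graph V E" "orientation E H"
  shows "balanced_CR V E (polytopeQ k V H) (b / real k) (1 - b) (sink_CR V H (\<lambda>_ _. 1))"
proof (rule balanced_sink_CR[OF assms(4,5)])
  fix x i
  assume x: "x \<in> scaled (b / real k) (polytopeQ k V H)" and i: "i \<in> support V x"
  have "i \<in> V" "0 < x i" using i by (auto simp: support_def)
  have "1 - b \<le> 1 - (\<Sum>u\<in>out_nbrs H i \<inter> support V x. x u)"
    using sum_out_nbrs_support_le[OF assms(1-3) x assms(4,5) \<open>i \<in> V\<close>] \<open>0 < x i\<close> by simp
  also have "\<dots> \<le> (\<Prod>u\<in>out_nbrs H i \<inter> support V x. 1 - x u)"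
    using scaled_polytopeQ_bounds(1)[OF assms(1-3) x]
    by (intro Weierstrass_prod_ineq) (auto simp: support_def)
  finally show "1 - b \<le> 1 * (\<Prod>u\<in>out_nbrs H i \<inter> support V x. 1 - x u * 1)" by simp
qed (simp_all add: scaled_polytopeQ_bounds(1)[OF assms(1-3)])

text \<open>Chosen so that v is both sampled and marked with probability 1 - e^(-x_v).\<close>
definition exp_mark_prob :: "real \<Rightarrow> real" where
  "exp_mark_prob t = (if 0 < t then (1 - exp (- t)) / t else 1)"

lemma exp_mark_prob_bounds: "0 \<le> exp_mark_prob t \<and> exp_mark_prob t \<le> 1"
  using exp_ge_add_one_self[of "- t"] by (auto simp: exp_mark_prob_def divide_simps)

lemma exp_neg_le_exp_mark_prob:
  assumes "0 \<le> t"
  shows "exp (- t) \<le> exp_mark_prob t"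
proof (cases "t = 0")
  case False
  have "t * exp (- t) \<le> 1 - exp (- t)"
    using exp_ge_add_one_self[of t] assms by (simp add: exp_minus field_simps)
  then show ?thesis using False assms by (simp add: exp_mark_prob_def field_simps)
qed (simp add: exp_mark_prob_def)

lemma one_minus_mult_exp_mark_prob: "0 \<le> t \<Longrightarrow> 1 - t * exp_mark_prob t = exp (- t)"
  by (auto simp: exp_mark_prob_def)

lemma balanced_sink_CR_exp_mark:
  assumes "k \<ge> 1" "0 \<le> b" "b \<le> 1" "simple_graph V E" "orientation E H"
  shows "balanced_CR V E (polytopeQ k V H) (b / real k) (exp (- b))
           (sink_CR V H (\<lambda>x v. exp_mark_prob (x v)))"
proof (rule balanced_sink_CR[OF assms(4,5)])
  fix x i
  assume x: "x \<in> scaled (b / real k) (polytopeQ k V H)" and i: "i \<in> support V x"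
  define N where "N = out_nbrs H i \<inter> support V x"
  have "i \<in> V" "0 \<le> x i" using i by (auto simp: support_def)
  have "finite N"
    using assms(4) by (auto simp: N_def support_def simple_graph_def)
  have "exp (- b) = exp (- x i) * exp (- (b - x i))" by (simp flip: exp_add)
  also have "\<dots> \<le> exp_mark_prob (x i) * exp (- (\<Sum>u\<in>N. x u))"
    using sum_out_nbrs_support_le[OF assms(1-3) x assms(4,5) \<open>i \<in> V\<close>] exp_mark_prob_bounds
    by (intro mult_mono exp_neg_le_exp_mark_prob \<open>0 \<le> x i\<close>) (auto simp: N_def)
  also have "exp (- (\<Sum>u\<in>N. x u)) = (\<Prod>u\<in>N. 1 - x u * exp_mark_prob (x u))"
    using \<open>finite N\<close> by (auto simp: exp_sum sum_negf[symmetric] N_def support_def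
        one_minus_mult_exp_mark_prob intro!: prod.cong)
  finally show "exp (- b) \<le> exp_mark_prob (x i) *
      (\<Prod>u\<in>out_nbrs H i \<inter> support V x. 1 - x u * exp_mark_prob (x u))"
    by (simp add: N_def)
qed (simp_all add: exp_mark_prob_bounds scaled_polytopeQ_bounds(1)[OF assms(1-3)])

theorem theorem3:
  fixes k :: nat and V :: "'a set" and E H :: "'a \<Rightarrow> 'a \<Rightarrow> bool" and b :: real
  assumes "k \<ge> 1"
    and "simple_graph V E"
    and "k_perfect_orientation k V E H"
    and "0 \<le> b" and "b \<le> 1"
  shows "(\<exists>sch. deterministic_CR sch \<and> oblivious_CR V sch \<and> monotone_CR V (polytopeQ k V H) (b / real k) sch
            \<and> balanced_CR V E (polytopeQ k V H) (b / real k) (1 - b) sch)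
       \<and> (\<exists>sch. monotone_CR V (polytopeQ k V H) (b / real k) sch
            \<and> balanced_CR V E (polytopeQ k V H) (b / real k) (exp (- b)) sch)"
proof -
  let ?Q = "polytopeQ k V H" and ?c = "b / real k"
  let ?det = "sink_CR V H (\<lambda>_ _. 1)" and ?rnd = "sink_CR V H (\<lambda>x v. exp_mark_prob (x v))"
  have H: "orientation E H" using assms(3) by (simp add: k_perfect_orientation_def)
  have "finite V" using assms(2) by (simp add: simple_graph_def)
  then have "oblivious_CR V ?det" by (rule oblivious_sink_CR_mark_all)
  moreover have "monotone_CR V ?Q ?c ?det" "monotone_CR V ?Q ?c ?rnd"
    using exp_mark_prob_bounds by (auto intro: monotone_sink_CR[OF assms(2) H])
  moreover have "balanced_CR V E ?Q ?c (1 - b) ?det"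
    by (rule balanced_sink_CR_mark_all[OF assms(1,4,5,2) H])
  moreover have "balanced_CR V E ?Q ?c (exp (- b)) ?rnd"
    by (rule balanced_sink_CR_exp_mark[OF assms(1,4,5,2) H])
  ultimately show ?thesis unfolding oblivious_CR_def by blast
qed

end
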